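(* Let $\alpha\ge1$, $\beta$ odd, and let ${\cal C}=\langle (b\mid 0),(\ell\mid fh+2f)\rangle\subseteq R_{\alpha,\beta}$ be a $\mathbb{Z}_2\mathbb{Z}_4$-additive cyclic code, where $f,h,g\in\mathbb{Z}_4[x]$ with $fhg=x^\beta-1$, $b\in\mathbb{Z}_2[x]$ divides $x^\alpha-1$, and $\ell\in\mathbb{Z}_2[x]/(x^\alpha-1)$. If ${\cal C}_b=\langle (b\mid 0),(0\mid 2f)\rangle$, then $\Phi({\cal C})$ is linear if and only if $\phi({\cal C}_Y)$ is linear.
   Context: $R_{\alpha,\beta}=\mathbb{Z}_2[x]/(x^\alpha-1)\times\mathbb{Z}_4[x]/(x^\beta-1)$, identified with $\mathbb{Z}_2^\alpha\times\mathbb{Z}_4^\beta$ via coefficient vectors; it is a $\mathbb{Z}_4[x]$-module via $p\star(b\mid a)=(\tilde pb\mid pa)$, where $\tilde p$ is the reduction of $p$ mod 2. A $\mathbb{Z}_2\mathbb{Z}_4$-additive cyclic code is a $\mathbb{Z}_4[x]$-submodule of $R_{\alpha,\beta}$, and $\langle\cdot\rangle$ denotes the generated submodule. ${\cal C}_b$ is the subcode of codewords of order at most 2; ${\cal C}_Y$ is the projection onto the last $\beta$ coordinates. Gray map: for $u'\in\mathbb{Z}_4^n$ with $u'_i=\tilde u'_i+2\hat u'_i$, $\tilde u'_i,\hat u'_i\in\{0,1\}$, $\phi(u')=(\hat u'_0,\dots,\hat u'_{n-1},\tilde u'_0+\hat u'_0,\dots,\tilde u'_{n-1}+\hat u'_{n-1})$;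 $\Phi(u\mid u')=(u\mid\phi(u'))$. Linear means a $\mathbb{Z}_2$-subspace. *)

theory Defs
  imports "HOL-Library.Numeral_Type" "HOL-Computational_Algebra.Polynomial"
begin

(* A vector of length n is a function nat => 'a (only indices < n matter;
   all vectors produced below vanish outside {0..<n}). *)

definition red2 :: "4 \<Rightarrow> 2" where
  "red2 x = of_int (Rep_bit0 x)"

(* the "hat" bit: u = tilde u + 2 * hat u with tilde u, hat u in {0,1} *)
definition hat4 :: "4 \<Rightarrow> 2" where
  "hat4 x = of_int (Rep_bit0 x div 2)"

(* coefficient vector of p mod (x^n - 1) *)
definition cred :: "nat \<Rightarrow> 'a::comm_monoid_add poly \<Rightarrow> nat \<Rightarrow> 'a" where
  "cred n p = (\<lambda>i. if i < n then (\<Sum>j\<in>{j. j \<le> degree p \<and> j mod n = i}. coeff p j) else 0)"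

definition vpoly :: "nat \<Rightarrow> (nat \<Rightarrow> 'a::comm_monoid_add) \<Rightarrow> 'a poly" where
  "vpoly n u = (\<Sum>i<n. monom (u i) i)"

type_synonym word = "(nat \<Rightarrow> 2) \<times> (nat \<Rightarrow> 4)"

definition wzero :: word where
  "wzero = ((\<lambda>_. 0), (\<lambda>_. 0))"

definition wadd :: "word \<Rightarrow> word \<Rightarrow> word" where
  "wadd c d = ((\<lambda>i. fst c i + fst d i), (\<lambda>i. snd c i + snd d i))"

(* Z4[x]-module action on R_{alpha,beta}: p * (b | a) = (tilde p b | p a) *)
definition smul :: "nat \<Rightarrow> nat \<Rightarrow> 4 poly \<Rightarrow> word \<Rightarrow> word" where
  "smul \<alpha> \<beta> p c = (cred \<alpha> (map_poly red2 p * vpoly \<alpha> (fst c)),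
                     cred \<beta> (p * vpoly \<beta> (snd c)))"

inductive_set gen :: "nat \<Rightarrow> nat \<Rightarrow> word set \<Rightarrow> word set" for \<alpha> \<beta> S where
  gen_zero: "wzero \<in> gen \<alpha> \<beta> S"
| gen_base: "s \<in> S \<Longrightarrow> s \<in> gen \<alpha> \<beta> S"
| gen_add: "c \<in> gen \<alpha> \<beta> S \<Longrightarrow> d \<in> gen \<alpha> \<beta> S \<Longrightarrow> wadd c d \<in> gen \<alpha> \<beta> S"
| gen_smul: "c \<in> gen \<alpha> \<beta> S \<Longrightarrow> smul \<alpha> \<beta> p c \<in> gen \<alpha> \<beta> S"

definition gray :: "nat \<Rightarrow> (nat \<Rightarrow> 4) \<Rightarrow> nat \<Rightarrow> 2" where
  "gray n v = (\<lambda>i. if i < n then hat4 (v i)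
                   else if i < 2 * n then red2 (v (i - n)) + hat4 (v (i - n))
                   else 0)"

definition Phi :: "nat \<Rightarrow> word \<Rightarrow> (nat \<Rightarrow> 2) \<times> (nat \<Rightarrow> 2)" where
  "Phi \<beta> c = (fst c, gray \<beta> (snd c))"

definition lin2 :: "(nat \<Rightarrow> 2) set \<Rightarrow> bool" where
  "lin2 S \<longleftrightarrow> (\<lambda>_. 0) \<in> S \<and> (\<forall>x\<in>S. \<forall>y\<in>S. (\<lambda>i. x i + y i) \<in> S)"

definition lin2p :: "((nat \<Rightarrow> 2) \<times> (nat \<Rightarrow> 2)) set \<Rightarrow> bool" where
  "lin2p S \<longleftrightarrow> ((\<lambda>_. 0), (\<lambda>_. 0)) \<in> S \<and>
     (\<forall>x\<in>S. \<forall>y\<in>S. ((\<lambda>i. fst x i + fst y i), (\<lambda>i. snd x i + snd y i)) \<in> S)"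

end

theory Submission
  imports Defs
begin

text \<open>Linearity of \<open>\<Phi>(C)\<close> trivially implies that of \<open>\<phi>(C\<^sub>Y)\<close>. Conversely, let \<open>u, v \<in> C\<close> and
  pick \<open>w \<in> C\<close> with \<open>\<phi>(w\<^sub>Y) = \<phi>(u\<^sub>Y) + \<phi>(v\<^sub>Y)\<close>. Since the Gray map satisfies
  \<open>\<phi>(a) + \<phi>(b) = \<phi>(a + b + 2 a b)\<close> on \<open>\<int>\<^sub>4\<close>, we get \<open>2(w - u - v)\<^sub>Y = 0\<close>.
  Hence \<open>z = w - u - v\<close> lies in \<open>C\<^sub>b\<close>; since \<open>C\<^sub>b\<close> is generated by \<open>(b | 0)\<close> and \<open>(0 | 2f)\<close>,
  also \<open>(0 | z\<^sub>Y) \<in> C\<close>, and \<open>u + v + (0 | z\<^sub>Y)\<close> is a codeword with image \<open>\<Phi>(u) + \<Phi>(v)\<close>.\<close>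

lemma Z4_cases: fixes x :: 4 shows "x = 0 \<or> x = 1 \<or> x = 2 \<or> x = 3"
proof (cases x)
  case (of_int z)
  then have "z = 0 \<or> z = 1 \<or> z = 2 \<or> z = 3" by auto
  then show ?thesis using of_int by auto
qed

lemma red2_hat4_simps [simp]:
  "red2 0 = 0" "red2 1 = 1" "red2 2 = 0" "red2 3 = 1"
  "hat4 0 = 0" "hat4 1 = 0" "hat4 2 = 1" "hat4 3 = 1"
  by (simp_all add: red2_def hat4_def bit0.Rep_0 bit0.Rep_1 bit0.Rep_numeral)

lemma Z2_add_self [simp]: fixes x :: 2 shows "x + x = 0"
proof (cases x)
  case (of_int z)
  then have "z = 0 \<or> z = 1" by auto
  then show ?thesis using of_int by auto
qed

lemma diff_eq_add_triple:
  fixes x y :: "'a::comm_ring_1"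
  assumes "(4::'a) = 0"
  shows "x - y = x + (y + (y + y))"
proof -
  have "y + (y + (y + y)) = 4 * y" by (simp add: algebra_simps)
  then show ?thesis using assms by (simp add: algebra_simps)
qed

lemma hat_red_add_imp_double_diff:
  fixes a b c :: 4
  assumes "hat4 c = hat4 a + hat4 b"
    and "red2 c + hat4 c = (red2 a + hat4 a) + (red2 b + hat4 b)"
  shows "2 * (c - a - b) = 0"
  using Z4_cases[of a] Z4_cases[of b] Z4_cases[of c] assms by auto

lemma gray_add_imp_double_diff:
  assumes "gray n w = (\<lambda>i. gray n u i + gray n v i)" and "i < n"
  shows "2 * (w i - u i - v i) = 0"
proof (rule hat_red_add_imp_double_diff)
  have "gray n w i = gray n u i + gray n v i"
    and "gray n w (i + n) = gray n u (i + n) + gray n v (i + n)"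
    using assms(1) by (simp_all add: fun_eq_iff)
  then show "hat4 (w i) = hat4 (u i) + hat4 (v i)"
    and "red2 (w i) + hat4 (w i) = (red2 (u i) + hat4 (u i)) + (red2 (v i) + hat4 (v i))"
    using assms(2) by (simp_all add: gray_def algebra_simps)
qed

lemma wadd_closed_diff:
  assumes add: "\<And>c d. c \<in> C \<Longrightarrow> d \<in> C \<Longrightarrow> wadd c d \<in> C"
    and "c \<in> C" "d \<in> C"
  shows "((\<lambda>i. fst c i - fst d i), (\<lambda>i. snd c i - snd d i)) \<in> C"
proof -
  have "(4::2) = 0" "(4::4) = 0" by simp_all
  then have "((\<lambda>i. fst c i - fst d i), (\<lambda>i. snd c i - snd d i)) = wadd c (wadd d (wadd d d))"
    by (simp add: wadd_def fun_eq_iff diff_eq_add_triple)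
  then show ?thesis using assms by simp
qed

lemma lin2_gray_snd_if_lin2p_Phi:
  assumes "lin2p (Phi n ` C)"
  shows "lin2 (gray n ` snd ` C)"
  unfolding lin2_def
proof (intro conjI ballI)
  from assms obtain c where "c \<in> C" "Phi n c = ((\<lambda>_. 0), (\<lambda>_. 0))"
    unfolding lin2p_def by force
  then show "(\<lambda>_. 0) \<in> gray n ` snd ` C" by (force simp: Phi_def)
next
  fix x y assume "x \<in> gray n ` snd ` C" "y \<in> gray n ` snd ` C"
  then obtain u v where u: "u \<in> C" "x = gray n (snd u)" and v: "v \<in> C" "y = gray n (snd v)"
    by blast
  then have "Phi n u \<in> Phi n ` C" "Phi n v \<in> Phi n ` C" by auto
  with assms obtain w where "w \<in> C"
    "Phi n w = ((\<lambda>i. fst (Phi n u) i + fst (Phi n v) i), (\<lambda>i. snd (Phi n u) i + snd (Phi n v) i))"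
    unfolding lin2p_def by force
  with u v have "w \<in> C" "gray n (snd w) = (\<lambda>i. x i + y i)" by (auto simp: Phi_def)
  then show "(\<lambda>i. x i + y i) \<in> gray n ` snd ` C" by force
qed

lemma lin2p_Phi_if_lin2_gray_snd:
  assumes zero: "wzero \<in> C"
    and add: "\<And>c d. c \<in> C \<Longrightarrow> d \<in> C \<Longrightarrow> wadd c d \<in> C"
    and support: "\<And>c i. c \<in> C \<Longrightarrow> n \<le> i \<Longrightarrow> snd c i = 0"
    and order2: "\<And>c. c \<in> C \<Longrightarrow> wadd c c = wzero \<Longrightarrow> ((\<lambda>_. 0), snd c) \<in> C"
    and lin: "lin2 (gray n ` snd ` C)"
  shows "lin2p (Phi n ` C)"
  unfolding lin2p_def
proof (intro conjI ballI)
  have "Phi n wzero = ((\<lambda>_. 0), (\<lambda>_. 0))" by (simp add: Phi_def wzero_def gray_def fun_eq_iff)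
  with zero show "((\<lambda>_. 0), (\<lambda>_. 0)) \<in> Phi n ` C" by force
next
  fix x y assume "x \<in> Phi n ` C" "y \<in> Phi n ` C"
  then obtain u v where u: "u \<in> C" "x = Phi n u" and v: "v \<in> C" "y = Phi n v" by blast
  then have "gray n (snd u) \<in> gray n ` snd ` C" "gray n (snd v) \<in> gray n ` snd ` C" by auto
  with lin obtain w where w: "w \<in> C" "gray n (snd w) = (\<lambda>i. gray n (snd u) i + gray n (snd v) i)"
    unfolding lin2_def by force
  define z where "z = ((\<lambda>i. fst w i - fst u i - fst v i), (\<lambda>i. snd w i - snd u i - snd v i))"
  have "z \<in> C"
    unfolding z_def using wadd_closed_diff[OF add wadd_closed_diff[OF add w(1) u(1)] v(1)] by simp
  have "2 * snd z i = 0" for i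
  proof (cases "i < n")
    case True
    then show ?thesis unfolding z_def using gray_add_imp_double_diff[OF w(2)] by simp
  next
    case False
    then show ?thesis unfolding z_def using support u(1) v(1) w(1) by simp
  qed
  then have "wadd z z = wzero" by (simp add: wadd_def wzero_def fun_eq_iff mult_2[symmetric])
  with \<open>z \<in> C\<close> have "((\<lambda>_. 0), snd z) \<in> C" by (rule order2)
  then have "wadd (wadd u v) ((\<lambda>_. 0), snd z) \<in> C" using u(1) v(1) by (blast intro: add)
  moreover have "Phi n (wadd (wadd u v) ((\<lambda>_. 0), snd z))
      = ((\<lambda>i. fst x i + fst y i), (\<lambda>i. snd x i + snd y i))"
    using u(2) v(2) w(2) by (simp add: Phi_def z_def wadd_def fun_eq_iff)
  ultimately show "((\<lambda>i. fst x i + fst y i), (\<lambda>i. snd x i + snd y i)) \<in> Phi n ` C" by force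
qed

lemma snd_gen_vanishes:
  assumes "c \<in> gen \<alpha> \<beta> S" and "\<And>s i. s \<in> S \<Longrightarrow> \<beta> \<le> i \<Longrightarrow> snd s i = 0" and "\<beta> \<le> i"
  shows "snd c i = 0"
  using assms(1)
  by induction (use assms(2,3) in \<open>simp_all add: wzero_def wadd_def smul_def cred_def\<close>)

lemma gen_axes_snd_proj:
  assumes "c \<in> gen \<alpha> \<beta> {(x, (\<lambda>_. 0)), ((\<lambda>_. 0), y)}"
  shows "((\<lambda>_. 0), snd c) \<in> gen \<alpha> \<beta> {(x, (\<lambda>_. 0)), ((\<lambda>_. 0), y)}"
  using assms
proof induction
  case gen_zero
  then show ?case using gen.gen_zero by (simp add: wzero_def)
next
  case (gen_base s)
  then show ?case using gen.gen_zero gen.gen_base by (auto simp: wzero_def)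
next
  case (gen_add c d)
  then have "wadd ((\<lambda>_. 0), snd c) ((\<lambda>_. 0), snd d) \<in> gen \<alpha> \<beta> {(x, (\<lambda>_. 0)), ((\<lambda>_. 0), y)}"
    by (blast intro: gen.gen_add)
  then show ?case by (simp add: wadd_def)
next
  case (gen_smul c p)
  then have "smul \<alpha> \<beta> p ((\<lambda>_. 0), snd c) \<in> gen \<alpha> \<beta> {(x, (\<lambda>_. 0)), ((\<lambda>_. 0), y)}"
    by (blast intro: gen.gen_smul)
  moreover have "cred \<alpha> (map_poly red2 p * vpoly \<alpha> (\<lambda>_. 0)) = (\<lambda>_. 0)"
    by (simp add: vpoly_def cred_def fun_eq_iff)
  ultimately show ?case by (simp add: smul_def)
qed

text \<open>Only the description of \<open>C\<^sub>b\<close> is used; the remaining hypotheses are what make \<open>C\<close> a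
  cyclic code in the paper.\<close>

theorem mainTheorem4:
  fixes \<alpha> \<beta> :: nat and f h g :: "4 poly" and b l :: "2 poly" and C :: "word set"
  assumes "\<alpha> \<ge> 1" and "odd \<beta>"
    and "f * h * g = monom 1 \<beta> - 1"
    and "b dvd monom 1 \<alpha> - 1"
    and C_def: "C = gen \<alpha> \<beta> {(cred \<alpha> b, (\<lambda>_. 0)), (cred \<alpha> l, cred \<beta> (f * h + 2 * f))}"
    and "{c \<in> C. wadd c c = wzero} = gen \<alpha> \<beta> {(cred \<alpha> b, (\<lambda>_. 0)), ((\<lambda>_. 0), cred \<beta> (2 * f))}"
  shows "lin2p (Phi \<beta> ` C) \<longleftrightarrow> lin2 (gray \<beta> ` (snd ` C))"
proof
  show "lin2 (gray \<beta> ` snd ` C)" if "lin2p (Phi \<beta> ` C)"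
    using that by (rule lin2_gray_snd_if_lin2p_Phi)
next
  have order2: "((\<lambda>_. 0), snd c) \<in> C" if "c \<in> C" "wadd c c = wzero" for c
    using that gen_axes_snd_proj assms(6) by blast
  have support: "snd c i = 0" if "c \<in> C" "\<beta> \<le> i" for c i
    using that unfolding C_def by (auto elim: snd_gen_vanishes simp: cred_def)
  show "lin2p (Phi \<beta> ` C)" if "lin2 (gray \<beta> ` snd ` C)"
    using lin2p_Phi_if_lin2_gray_snd[OF _ _ support order2 that]
    unfolding C_def by (blast intro: gen.gen_zero gen.gen_add)
qed

end
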